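(* Let $n\ge 1$ and $p\in(0,1)^n$. Let $Y\in\{0,1\}$ be a random bit with $\mathbb{P}(Y=1)=\mathbb{P}(Y=0)=1/2$, and conditionally on $Y$ let $X_1,\ldots,X_n\in\{0,1\}$ be independent with $\mathbb{P}(X_i=1\mid Y=1)=\mathbb{P}(X_i=0\mid Y=0)=p_i$. Let $f^{\mathrm{OPT}}:\{0,1\}^n\to\{0,1\}$ be a decision rule minimizing $\mathbb{P}(f(X)\neq Y)$ over all $f:\{0,1\}^n\to\{0,1\}$, where $X=(X_1,\ldots,X_n)$. Let $w_i=\log\frac{p_i}{1-p_i}$. Then $$\mathbb{P}(f^{\mathrm{OPT}}(X)\neq Y)\ge\frac12\cdot 2^n\sqrt{\prod_{i=1}^n p_i(1-p_i)}\cdot\exp\Big(-\frac12\sqrt{\sum_{i=1}^n w_i^2}\Big).$$ *)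

theory Defs
  imports Complex_Main
begin

text \<open>A point x of {0,1}^n is encoded by the set S = {i < n. x_i = 1} (a subset of {..<n});
  a bit is encoded as bool (True = 1).\<close>

definition joint_pmf :: "nat \<Rightarrow> (nat \<Rightarrow> real) \<Rightarrow> nat set \<Rightarrow> bool \<Rightarrow> real" where
  "joint_pmf n p S y = (1/2) * (\<Prod>i<n. if (i \<in> S) = y then p i else 1 - p i)"

definition err_prob :: "nat \<Rightarrow> (nat \<Rightarrow> real) \<Rightarrow> (nat set \<Rightarrow> bool) \<Rightarrow> real" where
  "err_prob n p f = (\<Sum>S\<in>Pow {..<n}. \<Sum>y\<in>(UNIV::bool set). if f S \<noteq> y then joint_pmf n p S y else 0)"

end

theory Submission
  imports Defs "HOL-Analysis.Convex"
begin

text \<open>Whatever a rule answers at a point x of the cube, it errs with at least the smaller of the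
  two joint masses of (x,0) and (x,1). For positive a, b we have min a b = sqrt (a b) exp (-|ln a - ln b| / 2);
  here the product of the two masses does not depend on x, and ln a - ln b is the log-likelihood
  ratio L(x) = \<Sum>i \<plusminus>w_i. By convexity of exp, the average over the 2^n points of exp (-|L|/2) is
  at least exp (-E|L| / 2), and E|L| \<le> sqrt (E L^2) = sqrt (\<Sum>i w_i^2), because the mixed terms
  w_i w_j cancel when averaged over the cube.\<close>

definition signed_sum :: "nat \<Rightarrow> (nat \<Rightarrow> real) \<Rightarrow> nat set \<Rightarrow> real" where
  "signed_sum n w S = (\<Sum>i<n. if i \<in> S then w i else - w i)"

lemma sum_Pow_signed_sum_squared:
  "(\<Sum>S\<in>Pow {..<n}. (signed_sum n w S)\<^sup>2) = 2 ^ n * (\<Sum>i<n. (w i)\<^sup>2)"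
proof (induction n)
  case 0
  then show ?case by (simp add: signed_sum_def)
next
  case (Suc n)
  have inj: "inj_on (insert n) (Pow {..<n})"
    by (rule inj_onI) (metis Pow_iff insert_ident lessThan_iff order_less_irrefl subset_eq)
  have without_n: "signed_sum (Suc n) w S = signed_sum n w S - w n" if "S \<in> Pow {..<n}" for S
    using that by (auto simp: signed_sum_def)
  have with_n: "signed_sum (Suc n) w (insert n S) = signed_sum n w S + w n"
    if "S \<in> Pow {..<n}" for S
  proof -
    have "(\<Sum>i<n. if i \<in> insert n S then w i else - w i) = signed_sum n w S"
      unfolding signed_sum_def by (rule sum.cong) auto
    then show ?thesis by (simp add: signed_sum_def)
  qed
  have "(\<Sum>S\<in>Pow {..<Suc n}. (signed_sum (Suc n) w S)\<^sup>2)
      = (\<Sum>S\<in>Pow {..<n}. (signed_sum (Suc n) w S)\<^sup>2)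
        + (\<Sum>S\<in>insert n ` Pow {..<n}. (signed_sum (Suc n) w S)\<^sup>2)"
    unfolding lessThan_Suc Pow_insert by (rule sum.union_disjoint) auto
  also have "\<dots> = (\<Sum>S\<in>Pow {..<n}. (signed_sum n w S - w n)\<^sup>2 + (signed_sum n w S + w n)\<^sup>2)"
    by (simp add: sum.reindex[OF inj] with_n without_n sum.distrib)
  also have "\<dots> = (\<Sum>S\<in>Pow {..<n}. 2 * (signed_sum n w S)\<^sup>2 + 2 * (w n)\<^sup>2)"
    by (simp add: power2_eq_square algebra_simps)
  also have "\<dots> = 2 * 2 ^ n * (\<Sum>i<n. (w i)\<^sup>2) + 2 ^ n * 2 * (w n)\<^sup>2"
    by (simp add: sum.distrib sum_distrib_left[symmetric] Suc card_Pow)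
  finally show ?case by (simp add: algebra_simps)
qed

lemma sqrt_mult_exp_half_ln_diff:
  fixes u v :: real
  assumes "u > 0" "v > 0"
  shows "sqrt (u * v) * exp ((ln u - ln v) / 2) = u"
proof -
  have "(ln u - ln v) / 2 = ln (sqrt (u / v))"
    using assms by (simp add: ln_sqrt ln_div)
  then have "exp ((ln u - ln v) / 2) = sqrt (u / v)"
    using assms by simp
  then have "sqrt (u * v) * exp ((ln u - ln v) / 2) = sqrt (u\<^sup>2)"
    using assms by (simp add: real_sqrt_mult[symmetric] power2_eq_square)
  then show ?thesis
    using assms by simp
qed

lemma min_eq_sqrt_mult_exp_abs_ln_diff:
  fixes a b :: real
  assumes "a > 0" "b > 0"
  shows "min a b = sqrt (a * b) * exp (- \<bar>ln a - ln b\<bar> / 2)"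
proof (cases "a \<le> b")
  case True
  then show ?thesis
    using assms sqrt_mult_exp_half_ln_diff[of a b] by simp
next
  case False
  then show ?thesis
    using assms sqrt_mult_exp_half_ln_diff[of b a] by (simp add: mult.commute)
qed

lemma min_joint_pmf:
  assumes p: "\<forall>i<n. 0 < p i \<and> p i < 1"
  shows "min (joint_pmf n p S True) (joint_pmf n p S False)
    = (1/2) * sqrt (\<Prod>i<n. p i * (1 - p i))
        * exp (- \<bar>signed_sum n (\<lambda>i. ln (p i / (1 - p i))) S\<bar> / 2)"
proof -
  define A where "A = (\<Prod>i<n. if i \<in> S then p i else 1 - p i)"
  define B where "B = (\<Prod>i<n. if i \<in> S then 1 - p i else p i)"
  have A_pos: "A > 0" and B_pos: "B > 0"
    unfolding A_def B_def using p by (auto intro!: prod_pos)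
  have "ln A - ln B
      = (\<Sum>i<n. ln (if i \<in> S then p i else 1 - p i) - ln (if i \<in> S then 1 - p i else p i))"
    unfolding A_def B_def sum_subtractf using p by (subst (1 2) ln_prod) auto
  also have "\<dots> = signed_sum n (\<lambda>i. ln (p i / (1 - p i))) S"
    unfolding signed_sum_def by (rule sum.cong) (use p in \<open>auto simp: ln_div\<close>)
  finally have ln_diff: "ln A - ln B = signed_sum n (\<lambda>i. ln (p i / (1 - p i))) S" .
  have "joint_pmf n p S True = A / 2"
    by (simp add: joint_pmf_def A_def)
  moreover have "joint_pmf n p S False = B / 2"
    unfolding joint_pmf_def B_def by (simp, rule prod.cong) auto
  moreover have "A * B = (\<Prod>i<n. p i * (1 - p i))"
    unfolding A_def B_def prod.distrib[symmetric] by (rule prod.cong) auto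
  ultimately show ?thesis
    using min_eq_sqrt_mult_exp_abs_ln_diff[of "A/2" "B/2"] A_pos B_pos ln_diff
    by (simp add: ln_div real_sqrt_divide real_sqrt_mult)
qed

lemma err_prob_ge_sum_min_joint_pmf:
  "(\<Sum>S\<in>Pow {..<n}. min (joint_pmf n p S True) (joint_pmf n p S False)) \<le> err_prob n p f"
  unfolding err_prob_def UNIV_bool by (rule sum_mono) auto

lemma exp_mean_le_mean_exp:
  fixes x :: "'a \<Rightarrow> real"
  assumes "finite P" "P \<noteq> {}"
  shows "exp ((\<Sum>S\<in>P. x S) / card P) \<le> (\<Sum>S\<in>P. exp (x S)) / card P"
  using convex_on_sum[OF assms exp_convex, of "\<lambda>_. 1 / card P" x] assms
  by (simp add: sum_divide_distrib)

lemma mean_abs_le_sqrt_mean_square: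
  fixes x :: "'a \<Rightarrow> real"
  shows "(\<Sum>S\<in>P. \<bar>x S\<bar>) / card P \<le> sqrt ((\<Sum>S\<in>P. (x S)\<^sup>2) / card P)"
proof (rule real_le_rsqrt)
  have "(\<Sum>S\<in>P. \<bar>x S\<bar> * 1)\<^sup>2 \<le> (\<Sum>S\<in>P. \<bar>x S\<bar>\<^sup>2) * (\<Sum>S\<in>P. 1\<^sup>2)"
    by (rule Cauchy_Schwarz_ineq_sum)
  then show "((\<Sum>S\<in>P. \<bar>x S\<bar>) / card P)\<^sup>2 \<le> (\<Sum>S\<in>P. (x S)\<^sup>2) / card P"
    by (cases "card P = 0") (simp_all add: power_divide field_simps power2_eq_square)
qed

lemma card_mult_exp_neg_rms_le_sum_exp_neg_abs:
  fixes x :: "'a \<Rightarrow> real"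
  assumes "finite P" "P \<noteq> {}"
  shows "card P * exp (- sqrt ((\<Sum>S\<in>P. (x S)\<^sup>2) / card P) / 2) \<le> (\<Sum>S\<in>P. exp (- \<bar>x S\<bar> / 2))"
proof -
  have card_pos: "real (card P) > 0"
    using assms by (simp add: card_gt_0_iff)
  have "exp (- sqrt ((\<Sum>S\<in>P. (x S)\<^sup>2) / card P) / 2) \<le> exp (- ((\<Sum>S\<in>P. \<bar>x S\<bar>) / card P) / 2)"
    using mean_abs_le_sqrt_mean_square[of x P] by simp
  also have "\<dots> = exp ((\<Sum>S\<in>P. - \<bar>x S\<bar> / 2) / card P)"
    by (simp add: sum_negf sum_divide_distrib[symmetric])
  also have "\<dots> \<le> (\<Sum>S\<in>P. exp (- \<bar>x S\<bar> / 2)) / card P"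
    by (rule exp_mean_le_mean_exp[OF assms])
  finally show ?thesis
    using card_pos by (simp add: field_simps)
qed

theorem theorem4:
  fixes n :: nat and p :: "nat \<Rightarrow> real" and f_opt :: "nat set \<Rightarrow> bool"
  assumes "n \<ge> 1"
    and "\<forall>i<n. 0 < p i \<and> p i < 1"
    and "\<forall>f :: nat set \<Rightarrow> bool. err_prob n p f_opt \<le> err_prob n p f"
  shows "err_prob n p f_opt \<ge>
           (1/2) * 2 ^ n * sqrt (\<Prod>i<n. p i * (1 - p i))
             * exp (- (1/2) * sqrt (\<Sum>i<n. (ln (p i / (1 - p i)))\<^sup>2))"
proof -
  define w where "w = (\<lambda>i. ln (p i / (1 - p i)))"
  define C where "C = (1/2) * sqrt (\<Prod>i<n. p i * (1 - p i))"
  have "C \<ge> 0"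
    unfolding C_def using assms(2) by (auto intro!: prod_nonneg)
  have "C * 2 ^ n * exp (- sqrt (\<Sum>i<n. (w i)\<^sup>2) / 2)
      = C * (card (Pow {..<n}) * exp (- sqrt ((\<Sum>S\<in>Pow {..<n}. (signed_sum n w S)\<^sup>2) / card (Pow {..<n})) / 2))"
    by (simp add: card_Pow sum_Pow_signed_sum_squared)
  also have "\<dots> \<le> C * (\<Sum>S\<in>Pow {..<n}. exp (- \<bar>signed_sum n w S\<bar> / 2))"
    using \<open>C \<ge> 0\<close> by (intro mult_left_mono card_mult_exp_neg_rms_le_sum_exp_neg_abs) auto
  also have "\<dots> = (\<Sum>S\<in>Pow {..<n}. min (joint_pmf n p S True) (joint_pmf n p S False))"
    by (simp only: min_joint_pmf[OF assms(2)] sum_distrib_left C_def w_def)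
  also have "\<dots> \<le> err_prob n p f_opt"
    by (rule err_prob_ge_sum_min_joint_pmf)
  finally show ?thesis
    by (simp add: C_def w_def mult_ac)
qed

end
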